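(* Let $A,B,C\in\mathfrak{sl}_4(\mathbb R)$ be diagonal matrices. Then the $G_2$-structure $(G_{A,B,C},\varphi)$ has torsion forms $\tau_0=0$, $\tau_1=0$, $\tau_2=-*d\psi$, $\tau_3=*d\varphi$, where $\psi=*\varphi$.
   Context: For commuting $A,B,C\in\mathfrak{sl}_4(\mathbb R)$, $\mathfrak g_{A,B,C}$ is the Lie algebra with basis $\{e_1,\dots,e_7\}$ in which $\langle e_7,e_1,e_2\rangle$ is an abelian subalgebra, $\mathfrak n=\langle e_3,\dots,e_6\rangle$ is an abelian ideal, and in the basis $\{e_3,\dots,e_6\}$, $\mathrm{ad}\,e_7|_{\mathfrak n}=A$, $\mathrm{ad}\,e_1|_{\mathfrak n}=B$, $\mathrm{ad}\,e_2|_{\mathfrak n}=C$; $G_{A,B,C}$ is the simply connected Lie group with this Lie algebra and $\varphi=e^{127}+e^{347}+e^{567}+e^{135}-e^{146}-e^{236}-e^{245}$ is the left-invariant positive 3-form ($\{e^i\}$ dual basis). The metric and orientation induced by $\varphi$ are those for which $\{e_1,\dots,e_7\}$ is an oriented orthonormal basis; $*$ is the corresponding Hodge star. The torsion forms of a $G_2$-structure $\varphi$ are the unique forms $\tau_i\in\Omega^i$, $i=0,1,2,3$ (with $\tau_2$ in the 14-dimensional and $\tau_3$ in the 27-dimensional $G_2$-irreducible component) such that $d\varphi=\tau_0\psi+3\tau_1\wedge\varphi+*\tau_3$ and $d\psi=4\tau_1\wedge\psi+\tau_2\wedge\varphi$. *)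

theory Defs
  imports Complex_Main "HOL-Library.Function_Algebras"
begin

text \<open>Left-invariant forms on the 7-dimensional Lie group are identified with
  elements of the exterior algebra of the dual of the Lie algebra with basis
  e_1,...,e_7 (indices 1..7). A form is represented by its coefficients:
  omega I is the coefficient of e^I = e^{i_1} wedge ... wedge e^{i_k},
  where I = {i_1 < ... < i_k} is a subset of {1..7}.\<close>

type_synonym form = "nat set \<Rightarrow> real"

definition deg_form :: "nat \<Rightarrow> form \<Rightarrow> bool" where
  "deg_form k \<omega> \<longleftrightarrow> (\<forall>I. \<omega> I \<noteq> 0 \<longrightarrow> I \<subseteq> {1..7} \<and> card I = k)"

definition basic :: "nat set \<Rightarrow> form" where
  "basic I = (\<lambda>K. if K = I then 1 else 0)"

text \<open>Sign of the shuffle: e^I wedge e^J = sgn_pair I J e^{I union J} (disjoint I, J).\<close>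
definition sgn_pair :: "nat set \<Rightarrow> nat set \<Rightarrow> real" where
  "sgn_pair I J = (-1) ^ card {(i, j). i \<in> I \<and> j \<in> J \<and> j < i}"

definition wedge :: "form \<Rightarrow> form \<Rightarrow> form" where
  "wedge \<alpha> \<beta> = (\<lambda>K. if K \<subseteq> {1..7}
      then (\<Sum>I\<in>Pow K. sgn_pair I (K - I) * \<alpha> I * \<beta> (K - I)) else 0)"

definition scal :: "real \<Rightarrow> form \<Rightarrow> form" where
  "scal a \<omega> = (\<lambda>K. a * \<omega> K)"

text \<open>Hodge star for the metric making e_1..e_7 orthonormal, orientation e^{1..7}:
  *e^I = sgn_pair I I^c e^{I^c}.\<close>
definition hodge :: "form \<Rightarrow> form" where
  "hodge \<omega> = (\<lambda>J. if J \<subseteq> {1..7}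
      then sgn_pair ({1..7} - J) J * \<omega> ({1..7} - J) else 0)"

text \<open>Evaluation omega(e_m, e_{r_1}, ..., e_{r_p}) with R = {r_1 < ... < r_p}.\<close>
definition ev_ins :: "form \<Rightarrow> nat \<Rightarrow> nat set \<Rightarrow> real" where
  "ev_ins \<omega> m R = (if m \<in> R then 0
      else (-1) ^ card {r \<in> R. r < m} * \<omega> (insert m R))"

text \<open>Exterior derivative of left-invariant forms (Chevalley--Eilenberg), for a Lie
  bracket with structure constants c: [e_i, e_j] = sum_m c i j m e_m:
  d omega(X_0..X_k) = sum_{a<b} (-1)^{a+b} omega([X_a,X_b], X_0, .., ^a, .., ^b, .., X_k).\<close>
definition dform :: "(nat \<Rightarrow> nat \<Rightarrow> nat \<Rightarrow> real) \<Rightarrow> form \<Rightarrow> form" where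
  "dform c \<omega> = (\<lambda>K. if K \<subseteq> {1..7} then
      (let xs = sorted_list_of_set K in
       \<Sum>a<length xs. \<Sum>b<length xs. if a < b then
         (-1) ^ (a + b) * (\<Sum>m\<in>{1..7}. c (xs ! a) (xs ! b) m *
              ev_ins \<omega> m (K - {xs ! a, xs ! b}))
       else 0)
    else 0)"

text \<open>Matrices in sl_4 are functions nat => nat => real with entries X p q, p,q in {1..4}.
  ad e_k restricted to n = <e_3,..,e_6> has matrix X in the basis e_3..e_6:
  [e_k, e_{2+q}] = sum_p X p q e_{2+p}.\<close>
definition adm :: "(nat \<Rightarrow> nat \<Rightarrow> real) \<Rightarrow> nat \<Rightarrow> nat \<Rightarrow> nat \<Rightarrow> nat \<Rightarrow> real" where
  "adm X k i j m =
     (if i = k \<and> j \<in> {3..6} \<and> m \<in> {3..6} then X (m - 2) (j - 2)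
      else if j = k \<and> i \<in> {3..6} \<and> m \<in> {3..6} then - X (m - 2) (i - 2)
      else 0)"

text \<open>Structure constants of g_{A,B,C}: ad e_7 = A, ad e_1 = B, ad e_2 = C on n;
  <e_7,e_1,e_2> abelian, n abelian.\<close>
definition gABC :: "(nat \<Rightarrow> nat \<Rightarrow> real) \<Rightarrow> (nat \<Rightarrow> nat \<Rightarrow> real) \<Rightarrow> (nat \<Rightarrow> nat \<Rightarrow> real)
    \<Rightarrow> nat \<Rightarrow> nat \<Rightarrow> nat \<Rightarrow> real" where
  "gABC A B C i j m = adm A 7 i j m + adm B 1 i j m + adm C 2 i j m"

definition phi :: form where
  "phi = basic {1,2,7} + basic {3,4,7} + basic {5,6,7} + basic {1,3,5}
         - basic {1,4,6} - basic {2,3,6} - basic {2,4,5}"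

definition psi :: form where
  "psi = hodge phi"

text \<open>G2-irreducible components (Bryant): Lambda^2_14 = {beta : beta wedge psi = 0},
  Lambda^3_27 = {gamma : gamma wedge phi = 0, gamma wedge psi = 0}.\<close>
definition Lambda2_14 :: "form set" where
  "Lambda2_14 = {\<beta>. deg_form 2 \<beta> \<and> wedge \<beta> psi = 0}"

definition Lambda3_27 :: "form set" where
  "Lambda3_27 = {\<gamma>. deg_form 3 \<gamma> \<and> wedge \<gamma> phi = 0 \<and> wedge \<gamma> psi = 0}"

definition is_torsion :: "(nat \<Rightarrow> nat \<Rightarrow> nat \<Rightarrow> real) \<Rightarrow> real \<Rightarrow> form \<Rightarrow> form \<Rightarrow> form \<Rightarrow> bool" where
  "is_torsion c t0 t1 t2 t3 \<longleftrightarrow>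
     deg_form 1 t1 \<and> t2 \<in> Lambda2_14 \<and> t3 \<in> Lambda3_27 \<and>
     dform c phi = scal t0 psi + scal 3 (wedge t1 phi) + hodge t3 \<and>
     dform c psi = scal 4 (wedge t1 psi) + wedge t2 phi"

definition diag4 :: "(nat \<Rightarrow> nat \<Rightarrow> real) \<Rightarrow> bool" where
  "diag4 X \<longleftrightarrow> (\<forall>p\<in>{1..4}. \<forall>q\<in>{1..4}. p \<noteq> q \<longrightarrow> X p q = 0)"

definition sl4 :: "(nat \<Rightarrow> nat \<Rightarrow> real) \<Rightarrow> bool" where
  "sl4 X \<longleftrightarrow> (\<Sum>p\<in>{1..4}. X p p) = 0"

end

(* The torsion forms of a G2-structure are unique: the map
   (t0, t1, t3) |-> t0 psi + 3 t1 ^ phi + *t3 is injective on R + Lambda^1 + Lambda^3_27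
   (the type decomposition of Lambda^4), and beta |-> beta ^ phi is injective on 2-forms.
   For diagonal A, B, C the differentials d phi and d psi are short explicit forms, and
   when A, B, C are traceless, *d phi lies in Lambda^3_27, -*d psi lies in Lambda^2_14 and
   (-*d psi) ^ phi = d psi. Since ** = id in dimension 7, (0, 0, -*d psi, *d phi) therefore
   solves the torsion equations. Identities between explicit forms are checked
   coefficientwise on the subsets of {1..7}. *)

theory Submission
  imports Defs
begin

section \<open>Homogeneous forms\<close>

lemma deg_formD: "deg_form k \<omega> \<Longrightarrow> \<omega> I \<noteq> 0 \<Longrightarrow> I \<subseteq> {1..7} \<and> card I = k"
  unfolding deg_form_def by blast

lemma atLeastAtMost_1_7: "{1..7::nat} = {1,2,3,4,5,6,7}"
  by auto

lemma form_eqI: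
  assumes "deg_form k \<alpha>" "deg_form k \<beta>"
    and "\<forall>I\<in>Pow {1,2,3,4,5,6,7}. card I = k \<longrightarrow> \<alpha> I = \<beta> I"
  shows "\<alpha> = \<beta>"
proof
  fix I
  show "\<alpha> I = \<beta> I"
  proof (cases "I \<subseteq> {1..7} \<and> card I = k")
    case True
    then show ?thesis using assms(3) unfolding atLeastAtMost_1_7 by blast
  next
    case False
    then show ?thesis using assms(1,2) deg_formD by metis
  qed
qed

lemma deg_form_zero: "deg_form k 0"
  unfolding deg_form_def by simp

lemma deg_form_basic: "I \<subseteq> {1..7} \<Longrightarrow> card I = k \<Longrightarrow> deg_form k (basic I)"
  unfolding deg_form_def basic_def by auto

lemma deg_form_add: "deg_form k \<alpha> \<Longrightarrow> deg_form k \<beta> \<Longrightarrow> deg_form k (\<alpha> + \<beta>)"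
  unfolding deg_form_def by (metis add.right_neutral plus_fun_apply)

lemma deg_form_uminus: "deg_form k \<alpha> \<Longrightarrow> deg_form k (- \<alpha>)"
  unfolding deg_form_def by simp

lemma deg_form_diff: "deg_form k \<alpha> \<Longrightarrow> deg_form k \<beta> \<Longrightarrow> deg_form k (\<alpha> - \<beta>)"
  unfolding diff_conv_add_uminus by (intro deg_form_add deg_form_uminus)

lemma deg_form_scal: "deg_form k \<alpha> \<Longrightarrow> deg_form k (scal a \<alpha>)"
  unfolding deg_form_def scal_def by simp

lemma deg_form_hodge:
  assumes "deg_form k \<omega>" "k \<le> 7"
  shows "deg_form (7 - k) (hodge \<omega>)"
  unfolding deg_form_def
proof (intro allI impI)
  fix J
  assume "hodge \<omega> J \<noteq> 0"
  then have J: "J \<subseteq> {1..7}" and "\<omega> ({1..7} - J) \<noteq> 0"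
    by (auto simp: hodge_def split: if_splits)
  then have "card ({1..7} - J) = k"
    using assms(1) deg_formD by blast
  moreover have "card ({1..7::nat} - J) = 7 - card J"
    using J by (simp add: card_Diff_subset finite_subset)
  ultimately show "J \<subseteq> {1..7} \<and> card J = 7 - k"
    using J card_mono[of "{1..7::nat}" J] by simp
qed

lemma deg_form_wedge:
  assumes "deg_form k \<alpha>" "deg_form l \<beta>"
  shows "deg_form (k + l) (wedge \<alpha> \<beta>)"
  unfolding deg_form_def
proof (intro allI impI)
  fix K
  assume nz: "wedge \<alpha> \<beta> K \<noteq> 0"
  then have K: "K \<subseteq> {1..7}"
    by (auto simp: wedge_def split: if_splits)
  then have fin: "finite K"
    by (rule finite_subset) simp
  from nz K obtain I where I: "I \<subseteq> K" "sgn_pair I (K - I) * \<alpha> I * \<beta> (K - I) \<noteq> 0"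
    unfolding wedge_def by (auto elim: sum.not_neutral_contains_not_neutral)
  then have "card I = k" "card (K - I) = l"
    using assms deg_formD by (metis mult_eq_0_iff)+
  moreover have "card (K - I) = card K - card I" "card I \<le> card K"
    using I(1) fin by (simp_all add: card_Diff_subset finite_subset card_mono)
  ultimately show "K \<subseteq> {1..7} \<and> card K = k + l"
    using K by linarith
qed

lemma deg_form_dform:
  assumes "deg_form k \<omega>"
  shows "deg_form (Suc k) (dform c \<omega>)"
  unfolding deg_form_def
proof (intro allI impI)
  fix K
  assume nz: "dform c \<omega> K \<noteq> 0"
  then have K: "K \<subseteq> {1..7}"
    by (auto simp: dform_def split: if_splits)
  then have fin: "finite K"
    by (rule finite_subset) simp
  define xs where "xs = sorted_list_of_set K"
  from nz K obtain a b m where ab: "a < b" "b < length xs"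
      and "ev_ins \<omega> m (K - {xs ! a, xs ! b}) \<noteq> 0"
    unfolding dform_def Let_def xs_def[symmetric]
    by (auto elim!: sum.not_neutral_contains_not_neutral split: if_splits)
  then have m: "m \<notin> K - {xs ! a, xs ! b}" and "\<omega> (insert m (K - {xs ! a, xs ! b})) \<noteq> 0"
    by (auto simp: ev_ins_def split: if_splits)
  then have "card (insert m (K - {xs ! a, xs ! b})) = k"
    using assms deg_formD by blast
  moreover have "distinct xs" "set xs = K"
    using fin by (simp_all add: xs_def)
  then have "xs ! a \<noteq> xs ! b" "xs ! a \<in> K" "xs ! b \<in> K"
    using ab by (auto simp: nth_eq_iff_index_eq)
  then have "card (K - {xs ! a, xs ! b}) = card K - 2" "2 \<le> card K"
    using fin card_mono[OF fin, of "{xs ! a, xs ! b}"] by (simp_all add: card_Diff_subset)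
  ultimately show "K \<subseteq> {1..7} \<and> card K = Suc k"
    using K m fin by simp
qed

lemma wedge_diff_left: "wedge (\<alpha> - \<beta>) \<gamma> = wedge \<alpha> \<gamma> - wedge \<beta> \<gamma>"
  unfolding wedge_def by (simp add: fun_eq_iff algebra_simps sum_subtractf)

lemma wedge_zero_left: "wedge 0 \<gamma> = 0"
  unfolding wedge_def by (simp add: fun_eq_iff)

lemma hodge_diff: "hodge (\<alpha> - \<beta>) = hodge \<alpha> - hodge \<beta>"
  unfolding hodge_def by (simp add: fun_eq_iff algebra_simps)

lemma scal_zero_left: "scal 0 \<omega> = 0"
  unfolding scal_def by (simp add: fun_eq_iff)

lemma scal_zero_right: "scal a 0 = 0"
  unfolding scal_def by (simp add: fun_eq_iff)

lemma sgn_pair_swap: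
  assumes "finite I" "finite J" "I \<inter> J = {}"
  shows "sgn_pair I J * sgn_pair J I = (-1) ^ (card I * card J)"
proof -
  let ?P = "{(i, j). i \<in> I \<and> j \<in> J \<and> j < i}"
  let ?Q = "{(i, j). i \<in> I \<and> j \<in> J \<and> i < j}"
  have "?Q = prod.swap ` {(j, i). j \<in> J \<and> i \<in> I \<and> i < j}"
    by auto
  then have swap: "sgn_pair J I = (-1) ^ card ?Q"
    unfolding sgn_pair_def by (simp add: card_image)
  have "i < j \<or> j < i" if "i \<in> I" "j \<in> J" for i j
    using that assms(3) linorder_neq_iff by blast
  then have union: "?P \<union> ?Q = I \<times> J" and "?P \<inter> ?Q = {}"
    by auto
  moreover have "finite ?P" "finite ?Q"
    by (rule finite_subset[of _ "I \<times> J"]; use assms in auto)+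
  ultimately have "card (?P \<union> ?Q) = card ?P + card ?Q"
    by (intro card_Un_disjoint)
  then have "card ?P + card ?Q = card I * card J"
    unfolding union by (simp add: card_cartesian_product)
  then show ?thesis
    unfolding swap unfolding sgn_pair_def by (simp add: power_add[symmetric])
qed

lemma hodge_hodge:
  assumes "deg_form k \<omega>"
  shows "hodge (hodge \<omega>) = \<omega>"
proof
  fix J
  show "hodge (hodge \<omega>) J = \<omega> J"
  proof (cases "J \<subseteq> {1..7}")
    case True
    have fin: "finite ({1..7} - J)" "finite J"
      using True finite_subset by auto
    have "card ({1..7::nat} - J) + card J = 7"
      using True card_mono[of "{1..7::nat}" J] by (simp add: card_Diff_subset fin(2))
    then have "even (card ({1..7::nat} - J) * card J)"
      by (metis even_add even_mult_iff odd_numeral)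
    moreover have "sgn_pair ({1..7} - J) J * sgn_pair J ({1..7} - J)
        = (-1) ^ (card ({1..7} - J) * card J)"
      by (rule sgn_pair_swap[OF fin]) blast
    ultimately have "sgn_pair ({1..7} - J) J * sgn_pair J ({1..7} - J) = 1"
      by (simp only: neg_one_even_power)
    moreover have "{1..7} - ({1..7} - J) = J"
      using True by blast
    moreover have "hodge (hodge \<omega>) J
        = sgn_pair ({1..7} - J) J * (sgn_pair ({1..7} - ({1..7} - J)) ({1..7} - J) * \<omega> ({1..7} - ({1..7} - J)))"
      using True unfolding hodge_def by (simp only: if_True Diff_subset)
    ultimately show ?thesis
      by (simp only: mult.assoc[symmetric] mult_1)
  next
    case False
    then have "\<omega> J = 0"
      using assms deg_formD by blast
    then show ?thesis
      using False by (simp add: hodge_def)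
  qed
qed

lemma insert_eq_iff_Diff: "insert a A = B \<longleftrightarrow> a \<in> B \<and> A - {a} = B - {a}"
  by auto

lemma atLeastAtMost_3_6: "{3..6::nat} = {3,4,5,6}"
  by auto

lemma sum_Pow_insert:
  assumes "a \<notin> A" "finite A"
  shows "sum f (Pow (insert a A)) = sum f (Pow A) + sum (\<lambda>I. f (insert a I)) (Pow A)"
proof -
  have "inj_on (insert a) (Pow A)"
    using assms(1) by (auto intro!: inj_onI simp: insert_ident)
  moreover have "Pow A \<inter> insert a ` Pow A = {}"
    using assms(1) by auto
  ultimately show ?thesis
    using assms(2) by (simp add: Pow_insert sum.union_disjoint sum.reindex)
qed

lemma sum_Pow_empty: "sum f (Pow {}) = f {}"
  by simp

lemma sum_1_to_7: "sum f {1,2,3,4,5,6,7::nat} = f 1 + f 2 + f 3 + f 4 + f 5 + f 6 + f 7"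
  by (simp add: add.assoc)

lemma scal_apply: "scal a \<omega> K = a * \<omega> K"
  by (simp add: scal_def)

lemma basic_apply: "basic I K = (if K = I then 1 else 0)"
  by (simp add: basic_def)

lemma hodge_apply: "hodge \<omega> J =
    (if J \<subseteq> {1..7} then sgn_pair ({1,2,3,4,5,6,7} - J) J * \<omega> ({1,2,3,4,5,6,7} - J) else 0)"
  unfolding hodge_def atLeastAtMost_1_7 ..

(* The sign in e^a ^ e^J = sgn_insert a J e^(insert a J). *)
definition sgn_insert :: "nat \<Rightarrow> nat set \<Rightarrow> real" where
  "sgn_insert a J = (-1) ^ card {j \<in> J. j < a}"

lemma sgn_insert_empty: "sgn_insert a {} = 1"
  by (simp add: sgn_insert_def)

lemma sgn_insert_insert:
  assumes "b \<notin> B" "finite B"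
  shows "sgn_insert a (insert b B) = (if b < a then - sgn_insert a B else sgn_insert a B)"
proof -
  have "{j \<in> insert b B. j < a} = (if b < a then insert b {j \<in> B. j < a} else {j \<in> B. j < a})"
    by auto
  then show ?thesis
    using assms by (simp add: sgn_insert_def)
qed

lemma sgn_pair_empty_left: "sgn_pair {} J = 1"
  by (simp add: sgn_pair_def)

lemma sgn_pair_insert_left:
  assumes "a \<notin> A" "finite A" "finite J"
  shows "sgn_pair (insert a A) J = sgn_insert a J * sgn_pair A J"
proof -
  let ?R = "{(i, j). i \<in> A \<and> j \<in> J \<and> j < i}"
  have "{(i, j). i \<in> insert a A \<and> j \<in> J \<and> j < i} = Pair a ` {j \<in> J. j < a} \<union> ?R"
    by auto
  moreover have "finite ?R"
    by (rule finite_subset[of _ "A \<times> J"]) (use assms in auto)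
  moreover have "Pair a ` {j \<in> J. j < a} \<inter> ?R = {}"
    using assms(1) by auto
  moreover have "card (Pair a ` {j \<in> J. j < a}) = card {j \<in> J. j < a}"
    by (simp add: card_image inj_on_def)
  ultimately show ?thesis
    using assms unfolding sgn_pair_def sgn_insert_def
    by (simp add: card_Un_disjoint card_image power_add)
qed

lemma ev_ins_eq: "ev_ins \<omega> m R = (if m \<in> R then 0 else sgn_insert m R * \<omega> (insert m R))"
  by (simp add: ev_ins_def sgn_insert_def)

lemma sorted_list_of_set_insert_less:
  assumes "finite A" "\<forall>x\<in>A. a < x"
  shows "sorted_list_of_set (insert a A) = a # sorted_list_of_set A"
proof -
  have "Min (insert a A) = a"
    using assms by (auto intro: Min_eqI less_imp_le)
  moreover have "insert a A - {a} = A"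
    using assms(2) by auto
  ultimately show ?thesis
    using assms(1) sorted_list_of_set_nonempty[of "insert a A"] by simp
qed

lemma Ball_Pow_insert:
  "a \<notin> A \<Longrightarrow> (\<forall>I\<in>Pow (insert a A). P I) \<longleftrightarrow> (\<forall>I\<in>Pow A. P I) \<and> (\<forall>I\<in>Pow A. P (insert a I))"
  by (auto simp: Pow_insert)

lemma card_insert_if_plus: "finite A \<Longrightarrow> card (insert a A) = (if a \<in> A then card A else card A + 1)"
  by (simp add: card_insert_if)

lemmas subsets_enum_simps = Ball_Pow_insert Pow_empty ball_simps insert_iff empty_iff simp_thms rel_simps
  arith_simps card_insert_if_plus card.empty one_add_one numeral_plus_one finite_insert finite.emptyI
  if_True if_False

lemmas form_eval_simps =
  insert_eq_iff_Diff sum_Pow_insert sum_Pow_empty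
  sgn_pair_empty_left sgn_pair_insert_left sgn_insert_empty sgn_insert_insert
  insert_iff empty_iff simp_thms rel_simps arith_simps more_arith_simps if_True if_False
  insert_Diff_if empty_Diff finite_insert finite.emptyI insert_subset empty_subsetI atLeastAtMost_iff
  insert_not_empty empty_not_insert plus_fun_apply minus_apply uminus_apply zero_fun_apply
  basic_apply scal_apply hodge_apply wedge_def

(* Kept apart from form_eval_simps: with the following rules present, evaluating wedge
   products becomes drastically slower. *)
lemmas dform_eval_simps = form_eval_simps
  dform_def Let_def ev_ins_eq atLeastAtMost_1_7 atLeastAtMost_3_6 sum_1_to_7 sum.empty
  sorted_list_of_set_insert_less ball_simps sorted_list_of_set_empty length_Cons list.size(3)
  sum.lessThan_Suc lessThan_0 nth_Cons_0 nth_Cons_Suc Suc_less_eq zero_less_Suc not_less0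
  power_Suc power_0 add_Suc add_0 add_Suc_right

lemma deg_form_phi: "deg_form 3 phi"
  unfolding phi_def
  by (intro deg_form_add deg_form_diff deg_form_basic) simp_all

lemma deg_form_psi: "deg_form 4 psi"
  unfolding psi_def using deg_form_hodge[OF deg_form_phi] by simp

lemma deg_form_dform_phi: "deg_form 4 (dform c phi)"
  using deg_form_dform[OF deg_form_phi] by (simp add: eval_nat_numeral)

lemma deg_form_dform_psi: "deg_form 5 (dform c psi)"
  using deg_form_dform[OF deg_form_psi] by (simp add: eval_nat_numeral)

lemma psi_eq:
  "psi = basic {1,2,3,4} + basic {1,2,5,6} + basic {1,3,6,7} + basic {1,4,5,7}
       + basic {2,3,5,7} - basic {2,4,6,7} + basic {3,4,5,6}"
    (is "_ = ?\<psi>")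
proof (rule form_eqI)
  show "deg_form 4 psi"
    by (rule deg_form_psi)
  show "deg_form 4 ?\<psi>"
    by (intro deg_form_add deg_form_diff deg_form_basic) simp_all
  show "\<forall>I\<in>Pow {1,2,3,4,5,6,7}. card I = 4 \<longrightarrow> psi I = ?\<psi> I"
    unfolding psi_def phi_def by (simp only: subsets_enum_simps) (simp only: form_eval_simps)
qed

section \<open>Uniqueness of the torsion forms\<close>

lemma two_form_eq_0_if_wedge_phi_eq_0:
  assumes "deg_form 2 \<beta>" "wedge \<beta> phi = 0"
  shows "\<beta> = 0"
proof (rule form_eqI[OF assms(1) deg_form_zero])
  have "\<forall>K\<in>Pow {1,2,3,4,5,6,7}. card K = 5 \<longrightarrow> wedge \<beta> phi K = 0"
    using assms(2) by simp
  then show "\<forall>I\<in>Pow {1,2,3,4,5,6,7}. card I = 2 \<longrightarrow> \<beta> I = 0 I"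
    unfolding phi_def
    by (simp (no_asm_use) only: subsets_enum_simps, simp (no_asm_use) only: form_eval_simps,
        elim conjE, intro conjI; linarith)
qed

lemma four_form_type_decomposition_unique:
  assumes "deg_form 1 \<tau>1" "\<tau>3 \<in> Lambda3_27"
    and "scal \<tau>0 psi + scal 3 (wedge \<tau>1 phi) + hodge \<tau>3 = 0"
  shows "\<tau>0 = 0 \<and> \<tau>1 = 0 \<and> \<tau>3 = 0"
proof -
  have deg3: "deg_form 3 \<tau>3" and "wedge \<tau>3 phi = 0" "wedge \<tau>3 psi = 0"
    using assms(2) by (simp_all add: Lambda3_27_def)
  then have "\<forall>K\<in>Pow {1,2,3,4,5,6,7}. card K = 6 \<longrightarrow> wedge \<tau>3 phi K = 0"
    and "\<forall>K\<in>Pow {1,2,3,4,5,6,7}. card K = 7 \<longrightarrow> wedge \<tau>3 psi K = 0"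
    and "\<forall>K\<in>Pow {1,2,3,4,5,6,7}. card K = 4 \<longrightarrow>
           (scal \<tau>0 psi + scal 3 (wedge \<tau>1 phi) + hodge \<tau>3) K = 0"
    using assms(3) by simp_all
  then have "\<tau>0 = 0 \<and> (\<forall>I\<in>Pow {1,2,3,4,5,6,7}. card I = 1 \<longrightarrow> \<tau>1 I = 0 I)
      \<and> (\<forall>I\<in>Pow {1,2,3,4,5,6,7}. card I = 3 \<longrightarrow> \<tau>3 I = 0 I)"
    unfolding psi_eq phi_def
    by (simp (no_asm_use) only: subsets_enum_simps, simp (no_asm_use) only: form_eval_simps,
        elim conjE, intro conjI; linarith)
  then show ?thesis
    using form_eqI[OF assms(1) deg_form_zero] form_eqI[OF deg3 deg_form_zero] by blast
qed

lemma is_torsion_unique: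
  assumes t: "is_torsion c t0 t1 t2 t3" and s: "is_torsion c s0 s1 s2 s3"
  shows "t0 = s0 \<and> t1 = s1 \<and> t2 = s2 \<and> t3 = s3"
proof -
  have deg: "deg_form 1 (t1 - s1)" "deg_form 2 (t2 - s2)" and \<tau>3: "t3 - s3 \<in> Lambda3_27"
    using t s unfolding is_torsion_def Lambda2_14_def Lambda3_27_def
    by (auto intro: deg_form_diff simp: wedge_diff_left)
  have "scal (t0 - s0) psi + scal 3 (wedge (t1 - s1) phi) + hodge (t3 - s3)
      = (scal t0 psi + scal 3 (wedge t1 phi) + hodge t3) - (scal s0 psi + scal 3 (wedge s1 phi) + hodge s3)"
    by (simp add: fun_eq_iff scal_def wedge_diff_left hodge_diff algebra_simps)
  also have "\<dots> = 0"
    using t s by (simp add: is_torsion_def)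
  finally have "t0 - s0 = 0 \<and> t1 - s1 = 0 \<and> t3 - s3 = 0"
    by (rule four_form_type_decomposition_unique[OF deg(1) \<tau>3])
  then have "t0 = s0" "t1 = s1" "t3 = s3"
    by simp_all
  moreover have "wedge (t2 - s2) phi = 0"
    using t s \<open>t1 = s1\<close> by (simp add: is_torsion_def wedge_diff_left)
  then have "t2 - s2 = 0"
    by (rule two_form_eq_0_if_wedge_phi_eq_0[OF deg(2)])
  then have "t2 = s2"
    by simp
  ultimately show ?thesis
    by blast
qed

section \<open>Diagonal A, B, C\<close>

lemma diag4_offdiag: "diag4 X \<Longrightarrow> p \<in> {1..4} \<Longrightarrow> q \<in> {1..4} \<Longrightarrow> p \<noteq> q \<Longrightarrow> X p q = 0"
  unfolding diag4_def by blast

lemma sl4_trace: "sl4 X \<Longrightarrow> X 1 1 + X 2 2 + X 3 3 + X 4 4 = 0"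
  unfolding sl4_def by (simp add: numeral_eq_Suc add.assoc)

lemma numeral_minus_2: "(3::nat) - 2 = 1" "(4::nat) - 2 = 2" "(5::nat) - 2 = 3" "(6::nat) - 2 = 4"
  by simp_all

lemma dform_gABC_phi:
  assumes "diag4 A" "diag4 B" "diag4 C"
  shows "dform (gABC A B C) phi =
      scal (C 1 1 + C 3 3) (basic {1,2,3,5}) + scal (B 1 1 + B 4 4) (basic {1,2,3,6})
    + scal (B 2 2 + B 3 3) (basic {1,2,4,5}) + scal (- C 2 2 - C 4 4) (basic {1,2,4,6})
    + scal (- B 1 1 - B 2 2) (basic {1,3,4,7}) + scal (A 1 1 + A 3 3) (basic {1,3,5,7})
    + scal (- A 2 2 - A 4 4) (basic {1,4,6,7}) + scal (- B 3 3 - B 4 4) (basic {1,5,6,7})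
    + scal (- C 1 1 - C 2 2) (basic {2,3,4,7}) + scal (- A 1 1 - A 4 4) (basic {2,3,6,7})
    + scal (- A 2 2 - A 3 3) (basic {2,4,5,7}) + scal (- C 3 3 - C 4 4) (basic {2,5,6,7})"
    (is "_ = ?d\<phi>")
proof (rule form_eqI)
  show "deg_form 4 (dform (gABC A B C) phi)"
    by (rule deg_form_dform_phi)
  show "deg_form 4 ?d\<phi>"
    by (intro deg_form_add deg_form_scal deg_form_basic) simp_all
  show "\<forall>I\<in>Pow {1,2,3,4,5,6,7}. card I = 4 \<longrightarrow> dform (gABC A B C) phi I = ?d\<phi> I"
    unfolding phi_def gABC_def adm_def
    by (simp only: subsets_enum_simps,
        simp only: dform_eval_simps diff_conv_add_uminus numeral_minus_2 diag4_offdiag[OF assms(1)]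
          diag4_offdiag[OF assms(2)] diag4_offdiag[OF assms(3)])
qed

lemma dform_gABC_psi:
  assumes "diag4 A" "diag4 B" "diag4 C"
  shows "dform (gABC A B C) psi =
      scal (- A 1 1 - A 2 2) (basic {1,2,3,4,7}) + scal (- B 1 1 - B 3 3) (basic {1,2,3,5,7})
    + scal (C 1 1 + C 4 4) (basic {1,2,3,6,7}) + scal (C 2 2 + C 3 3) (basic {1,2,4,5,7})
    + scal (B 2 2 + B 4 4) (basic {1,2,4,6,7}) + scal (- A 3 3 - A 4 4) (basic {1,2,5,6,7})
    + scal (- B 1 1 - B 2 2 - B 3 3 - B 4 4) (basic {1,3,4,5,6})
    + scal (- C 1 1 - C 2 2 - C 3 3 - C 4 4) (basic {2,3,4,5,6})
    + scal (- A 1 1 - A 2 2 - A 3 3 - A 4 4) (basic {3,4,5,6,7})"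
    (is "_ = ?d\<psi>")
proof (rule form_eqI)
  show "deg_form 5 (dform (gABC A B C) psi)"
    by (rule deg_form_dform_psi)
  show "deg_form 5 ?d\<psi>"
    by (intro deg_form_add deg_form_scal deg_form_basic) simp_all
  show "\<forall>I\<in>Pow {1,2,3,4,5,6,7}. card I = 5 \<longrightarrow> dform (gABC A B C) psi I = ?d\<psi> I"
    unfolding psi_eq gABC_def adm_def
    by (simp only: subsets_enum_simps,
        simp only: dform_eval_simps diff_conv_add_uminus numeral_minus_2 diag4_offdiag[OF assms(1)]
          diag4_offdiag[OF assms(2)] diag4_offdiag[OF assms(3)])
qed


context
  fixes A B C :: "nat \<Rightarrow> nat \<Rightarrow> real"
  assumes diag: "diag4 A" "diag4 B" "diag4 C" and trace: "sl4 A" "sl4 B" "sl4 C"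
begin

lemma hodge_dform_gABC_phi_in_Lambda3_27:
  "hodge (dform (gABC A B C) phi) \<in> Lambda3_27"
proof -
  have deg3: "deg_form 3 (hodge (dform (gABC A B C) phi))"
    using deg_form_hodge[OF deg_form_dform_phi] by simp
  have "\<forall>K\<in>Pow {1,2,3,4,5,6,7}. card K = 6 \<longrightarrow> wedge (hodge (dform (gABC A B C) phi)) phi K = 0 K"
    and "\<forall>K\<in>Pow {1,2,3,4,5,6,7}. card K = 7 \<longrightarrow> wedge (hodge (dform (gABC A B C) phi)) psi K = 0 K"
    using sl4_trace[OF trace(1)] sl4_trace[OF trace(2)] sl4_trace[OF trace(3)]
    unfolding dform_gABC_phi[OF diag] unfolding psi_eq phi_def
    by (simp (no_asm_use) only: subsets_enum_simps,
        simp (no_asm_use) only: form_eval_simps, (intro conjI)?; linarith)+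
  moreover have "deg_form 6 (wedge (hodge (dform (gABC A B C) phi)) phi)"
    using deg_form_wedge[OF deg3 deg_form_phi] by simp
  moreover have "deg_form 7 (wedge (hodge (dform (gABC A B C) phi)) psi)"
    using deg_form_wedge[OF deg3 deg_form_psi] by simp
  ultimately show ?thesis
    unfolding Lambda3_27_def using deg3 form_eqI deg_form_zero by blast
qed

lemma hodge_dform_gABC_psi_in_Lambda2_14:
  "- hodge (dform (gABC A B C) psi) \<in> Lambda2_14"
proof -
  have deg2: "deg_form 2 (- hodge (dform (gABC A B C) psi))"
    using deg_form_uminus[OF deg_form_hodge[OF deg_form_dform_psi]] by simp
  have "\<forall>K\<in>Pow {1,2,3,4,5,6,7}. card K = 6 \<longrightarrow> wedge (- hodge (dform (gABC A B C) psi)) psi K = 0 K"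
    using sl4_trace[OF trace(1)] sl4_trace[OF trace(2)] sl4_trace[OF trace(3)]
    unfolding dform_gABC_psi[OF diag] unfolding psi_eq
    by (simp (no_asm_use) only: subsets_enum_simps,
        simp (no_asm_use) only: form_eval_simps, (intro conjI)?; linarith)
  moreover have "deg_form 6 (wedge (- hodge (dform (gABC A B C) psi)) psi)"
    using deg_form_wedge[OF deg2 deg_form_psi] by simp
  ultimately show ?thesis
    unfolding Lambda2_14_def using deg2 form_eqI deg_form_zero by blast
qed

lemma wedge_hodge_dform_gABC_psi_phi:
  "wedge (- hodge (dform (gABC A B C) psi)) phi = dform (gABC A B C) psi"
proof (rule form_eqI)
  show "deg_form 5 (wedge (- hodge (dform (gABC A B C) psi)) phi)"
    using deg_form_wedge[OF deg_form_uminus[OF deg_form_hodge[OF deg_form_dform_psi]] deg_form_phi]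
    by simp
  show "\<forall>K\<in>Pow {1,2,3,4,5,6,7}. card K = 5 \<longrightarrow>
      wedge (- hodge (dform (gABC A B C) psi)) phi K = dform (gABC A B C) psi K"
    using sl4_trace[OF trace(1)] sl4_trace[OF trace(2)] sl4_trace[OF trace(3)]
    unfolding dform_gABC_psi[OF diag] unfolding phi_def
    by (simp (no_asm_use) only: subsets_enum_simps,
        simp (no_asm_use) only: form_eval_simps, (intro conjI)?; linarith)
qed (rule deg_form_dform_psi)

lemma is_torsion_gABC_diag:
  "is_torsion (gABC A B C) 0 0 (- hodge (dform (gABC A B C) psi)) (hodge (dform (gABC A B C) phi))"
  unfolding is_torsion_def
  using hodge_dform_gABC_psi_in_Lambda2_14 hodge_dform_gABC_phi_in_Lambda3_27
    wedge_hodge_dform_gABC_psi_phi hodge_hodge[OF deg_form_dform_phi]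
  by (simp add: deg_form_zero scal_zero_left scal_zero_right wedge_zero_left)

end

theorem corollary4p8:
  fixes A B C :: "nat \<Rightarrow> nat \<Rightarrow> real"
  assumes "sl4 A" "sl4 B" "sl4 C"
    and "diag4 A" "diag4 B" "diag4 C"
  shows "\<forall>t0 t1 t2 t3. is_torsion (gABC A B C) t0 t1 t2 t3 \<longleftrightarrow>
           (t0 = 0 \<and> t1 = (\<lambda>_. 0) \<and> t2 = - hodge (dform (gABC A B C) psi)
            \<and> t3 = hodge (dform (gABC A B C) phi))"
proof (intro allI)
  fix t0 t1 t2 t3
  have "is_torsion (gABC A B C) 0 0 (- hodge (dform (gABC A B C) psi)) (hodge (dform (gABC A B C) phi))"
    using is_torsion_gABC_diag assms by blast
  then show "is_torsion (gABC A B C) t0 t1 t2 t3 \<longleftrightarrow>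
      (t0 = 0 \<and> t1 = (\<lambda>_. 0) \<and> t2 = - hodge (dform (gABC A B C) psi)
       \<and> t3 = hodge (dform (gABC A B C) phi))"
    using is_torsion_unique unfolding zero_fun_def by blast
qed

end
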